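(* For every nonnegative integer $n$, $$\sum_{k=0}^{\infty}(-1)^k(4k+1)\,\frac{(-2n)_k\,(-3n-\tfrac14)_k\,(\tfrac12)_k}{k!\,(2n+\tfrac32)_k\,(3n+\tfrac74)_k}=\left(\frac{2^2 3^3}{5^5}\right)^n\frac{(\tfrac{11}{12})_n(\tfrac{7}{12})_n(\tfrac54)_n^2}{(\tfrac{11}{20})_n(\tfrac{19}{20})_n(\tfrac{23}{20})_n(\tfrac{7}{20})_n}.$$ (The sum is finite, since $(-2n)_k=0$ for $k>2n$.)
   Context: $(a)_j=\Gamma(a+j)/\Gamma(a)=a(a+1)\cdots(a+j-1)$ denotes the rising factorial (Pochhammer symbol), with $(a)_0=1$. *)

theory Defs
  imports "HOL-Analysis.Analysis"
begin

end

theory Submission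
  imports Defs
begin

(* Proof by creative telescoping (Zeilberger's method).
   Write F(n,k) for the summand, S(n) = sum_k F(n,k) and R(n) for the right-hand side.  We exhibit a certificate
   G(n,k) = H(n,k) W(n,k), where H is the hypergeometric term with parameters shifted by
   integers and W an explicit polynomial, such that
     s(n) (q(n) F(n+1,k) - p(n) F(n,k)) = G(n,k+1) - G(n,k)
   with q(n) = 5 (20n+11)(20n+19)(20n+23)(20n+7), p(n) = 12 (12n+11)(12n+7)(4n+5)^2 and a
   positive polynomial s(n).  Dividing by H(n,k), this is a polynomial identity checked by
   the Groebner-basis method 'algebra'.  Summing over k gives q(n) S(n+1) = p(n) S(n).
   R satisfies the same recurrence and S(0) = R(0) = 1, so S = R. *)

(* Shifting a rising factorial: both sides equal (z)_{k+m}. *)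
lemma pochhammer_shift:
  "pochhammer z k * pochhammer (z + of_nat k) m = pochhammer z m * pochhammer (z + of_nat m) k"
  by (metis pochhammer_product' add.commute)

lemma pochhammer_2: "pochhammer z 2 = z * (z + 1)"
  by (simp add: numeral_eq_Suc pochhammer_Suc)

lemma pochhammer_3: "pochhammer z 3 = z * (z + 1) * (z + 2)"
  by (simp add: numeral_eq_Suc pochhammer_Suc algebra_simps)

definition hterm :: "real \<Rightarrow> real \<Rightarrow> real \<Rightarrow> real \<Rightarrow> nat \<Rightarrow> real" where
  "hterm a b c d k = (-1) ^ k * (pochhammer a k * pochhammer b k * pochhammer (1/2) k)
                     / (fact k * pochhammer c k * pochhammer d k)"

lemma hterm_Suc_ratio:
  "hterm a b c d (Suc k) = hterm a b c d k *
     (- ((a + real k) * (b + real k) * (1/2 + real k)) / ((real k + 1) * (c + real k) * (d + real k)))"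
  unfolding hterm_def pochhammer_rec' fact_Suc power_Suc times_divide_times_eq
  by (intro arg_cong2[where f="(/)"]) (simp_all add: algebra_simps)

(* The same ratio in cleared-denominator form; positivity of c, d makes the
   denominators nonzero. *)
lemma hterm_Suc:
  assumes "c > 0" "d > 0"
  shows "hterm a b c d (Suc k) * ((real k + 1) * (c + real k) * (d + real k))
       = - hterm a b c d k * ((a + real k) * (b + real k) * (1/2 + real k))"
proof -
  have "(real k + 1) * (c + real k) * (d + real k) \<noteq> 0"
    using assms by (simp add: add_pos_nonneg)
  then show ?thesis unfolding hterm_Suc_ratio by simp
qed

(* Shifting the parameters by integers changes the term only by a ratio of
   polynomials in k: (a)_k / (a-i)_k = (a-i+k)_i / (a-i)_i, and dually for c, d. *)
lemma hterm_shift: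
  fixes i j l m :: nat
  assumes "c > 0" "d > 0"
  shows "hterm a b c d k * (pochhammer (a - i) i * pochhammer (b - j) j * pochhammer c l * pochhammer d m)
       = hterm (a - i) (b - j) (c + l) (d + m) k
         * (pochhammer (a - i + k) i * pochhammer (b - j + k) j * pochhammer (c + k) l * pochhammer (d + k) m)"
proof -
  have nz: "pochhammer c k \<noteq> 0" "pochhammer d k \<noteq> 0"
           "pochhammer (c + l) k \<noteq> 0" "pochhammer (d + m) k \<noteq> 0"
    using assms pochhammer_pos[of c k] pochhammer_pos[of d k]
      pochhammer_pos[of "c + l" k] pochhammer_pos[of "d + m" k] by (auto simp: add_pos_nonneg)
  have sa: "pochhammer (a - i) i * pochhammer a k = pochhammer (a - i) k * pochhammer (a - i + k) i"
    using pochhammer_shift[of "a - i" k i] by simp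
  have sb: "pochhammer (b - j) j * pochhammer b k = pochhammer (b - j) k * pochhammer (b - j + k) j"
    using pochhammer_shift[of "b - j" k j] by simp
  have fc: "pochhammer c l / pochhammer c k = pochhammer (c + k) l / pochhammer (c + l) k"
    using pochhammer_shift[of c k l] nz by (simp add: divide_simps mult.commute)
  have fd: "pochhammer d m / pochhammer d k = pochhammer (d + k) m / pochhammer (d + m) k"
    using pochhammer_shift[of d k m] nz by (simp add: divide_simps mult.commute)
  define t :: real where "t = (-1) ^ k * pochhammer (1/2) k / fact k"
  have "hterm a b c d k * (pochhammer (a - i) i * pochhammer (b - j) j * pochhammer c l * pochhammer d m)
      = t * (pochhammer (a - i) i * pochhammer a k) * (pochhammer (b - j) j * pochhammer b k)
          * (pochhammer c l / pochhammer c k) * (pochhammer d m / pochhammer d k)"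
    unfolding hterm_def t_def by (simp add: field_simps)
  also have "\<dots> = t * (pochhammer (a - i) k * pochhammer (a - i + k) i) * (pochhammer (b - j) k * pochhammer (b - j + k) j)
          * (pochhammer (c + k) l / pochhammer (c + l) k) * (pochhammer (d + k) m / pochhammer (d + m) k)"
    unfolding sa sb fc fd ..
  also have "\<dots> = hterm (a - i) (b - j) (c + l) (d + m) k
         * (pochhammer (a - i + k) i * pochhammer (b - j + k) j * pochhammer (c + k) l * pochhammer (d + k) m)"
    unfolding hterm_def t_def by (simp add: field_simps)
  finally show ?thesis .
qed

lemma telescoping_sum_relation:
  fixes f g G :: "nat \<Rightarrow> 'a :: real_normed_field" and a b :: 'a and N :: nat
  assumes "\<And>k. N \<le> k \<Longrightarrow> f k = 0" "\<And>k. N \<le> k \<Longrightarrow> g k = 0"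
    and "\<And>k. a * g k - b * f k = G (Suc k) - G k" "G 0 = 0" "G N = 0"
  shows "a * suminf g = b * suminf f"
proof -
  have "suminf f = (\<Sum>k<N. f k)" "suminf g = (\<Sum>k<N. g k)"
    by (rule suminf_finite; simp add: assms(1,2))+
  moreover have "a * (\<Sum>k<N. g k) - b * (\<Sum>k<N. f k) = (\<Sum>k<N. G (Suc k) - G k)"
    by (simp add: sum_distrib_left sum_subtractf assms(3)[symmetric])
  moreover have "(\<Sum>k<N. G (Suc k) - G k) = 0"
    by (simp add: sum_lessThan_telescope assms(4,5))
  ultimately show ?thesis by simp
qed

lemma first_order_recurrence_unique:
  fixes S R p q :: "nat \<Rightarrow> 'a :: field"
  assumes "S 0 = R 0" "\<And>n. q n \<noteq> 0"
    and "\<And>n. q n * S (Suc n) = p n * S n" "\<And>n. q n * R (Suc n) = p n * R n"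
  shows "S n = R n"
proof (induction n)
  case 0
  show ?case by (rule assms(1))
next
  case (Suc n)
  have "q n * S (Suc n) = q n * R (Suc n)"
    using assms(3,4) Suc.IH by simp
  then show ?case using assms(2) by simp
qed

definition summand :: "nat \<Rightarrow> nat \<Rightarrow> real" where
  "summand n k = (-1::real) ^ k * (4 * real k + 1) *
            (pochhammer (- 2 * real n) k * pochhammer (- 3 * real n - 1/4) k * pochhammer (1/2) k)
          / (fact k * pochhammer (2 * real n + 3/2) k * pochhammer (3 * real n + 7/4) k)"

definition closed_form :: "nat \<Rightarrow> real" where
  "closed_form n = ((2^2 * 3^3) / 5^5) ^ n *
         (pochhammer (11/12) n * pochhammer (7/12) n * (pochhammer (5/4) n)^2)
         / (pochhammer (11/20) n * pochhammer (19/20) n * pochhammer (23/20) n * pochhammer (7/20) n)"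

lemma summand_hterm:
  "summand n k = (4 * real k + 1) * hterm (- 2 * real n) (- 3 * real n - 1/4) (2 * real n + 3/2) (3 * real n + 7/4) k"
  unfolding summand_def hterm_def by simp

(* H(n,k): the term with parameters shifted by (-2,-3,+2,+3); it is the
   common hypergeometric part of F(n,k), F(n+1,k) and the certificate. *)
definition shifted :: "nat \<Rightarrow> nat \<Rightarrow> real" where
  "shifted n = hterm (- 2 * real n - 2) (- 3 * real n - 13/4) (2 * real n + 7/2) (3 * real n + 19/4)"

(* The polynomial factors relating F(n,k) to H(n,k), as produced by hterm_shift
   with shifts (2,3,2,3); x stands for n and y for k. *)
definition shift_num :: "real \<Rightarrow> real \<Rightarrow> real" where
  "shift_num x y = pochhammer (- 2 * x - 2 + y) 2 * pochhammer (- 3 * x - 13/4 + y) 3"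

definition shift_den :: "real \<Rightarrow> real \<Rightarrow> real" where
  "shift_den x y = pochhammer (2 * x + 3/2 + y) 2 * pochhammer (3 * x + 7/4 + y) 3"

lemma summand_Suc: "summand (Suc n) k = (4 * real k + 1) * shifted n k"
proof -
  have params: "- 2 * real (Suc n) = - 2 * real n - 2" "- 3 * real (Suc n) - 1/4 = - 3 * real n - 13/4"
       "2 * real (Suc n) + 3/2 = 2 * real n + 7/2" "3 * real (Suc n) + 7/4 = 3 * real n + 19/4"
    by simp_all
  show ?thesis unfolding summand_hterm shifted_def params ..
qed

lemma summand_via_shifted:
  "summand n k * (shift_num (real n) 0 * shift_den (real n) 0)
     = (4 * real k + 1) * shifted n k * shift_num (real n) (real k) * shift_den (real n) (real k)"
proof -
  have params: "- 2 * real n - of_nat 2 = - 2 * real n - 2" "- 3 * real n - 1/4 - of_nat 3 = - 3 * real n - 13/4"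
       "2 * real n + 3/2 + of_nat 2 = 2 * real n + 7/2" "3 * real n + 7/4 + of_nat 3 = 3 * real n + 19/4"
    by simp_all
  have shift: "hterm (- 2 * real n) (- 3 * real n - 1/4) (2 * real n + 3/2) (3 * real n + 7/4) k
        * (pochhammer (- 2 * real n - 2) 2 * pochhammer (- 3 * real n - 13/4) 3
           * pochhammer (2 * real n + 3/2) 2 * pochhammer (3 * real n + 7/4) 3)
      = shifted n k * (pochhammer (- 2 * real n - 2 + real k) 2 * pochhammer (- 3 * real n - 13/4 + real k) 3
           * pochhammer (2 * real n + 3/2 + real k) 2 * pochhammer (3 * real n + 7/4 + real k) 3)"
    using hterm_shift[where a = "- 2 * real n" and b = "- 3 * real n - 1/4" and c = "2 * real n + 3/2"
        and d = "3 * real n + 7/4" and i = 2 and j = 3 and l = 2 and m = 3 and k = k]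
    unfolding params shifted_def by simp
  have "summand n k * (shift_num (real n) 0 * shift_den (real n) 0)
      = (4 * real k + 1) * (hterm (- 2 * real n) (- 3 * real n - 1/4) (2 * real n + 3/2) (3 * real n + 7/4) k
        * (pochhammer (- 2 * real n - 2) 2 * pochhammer (- 3 * real n - 13/4) 3
           * pochhammer (2 * real n + 3/2) 2 * pochhammer (3 * real n + 7/4) 3))"
    unfolding summand_hterm shift_num_def shift_den_def by (simp add: ac_simps)
  also have "\<dots> = (4 * real k + 1) * shifted n k * shift_num (real n) (real k) * shift_den (real n) (real k)"
    unfolding shift shift_num_def shift_den_def by (simp add: ac_simps)
  finally show ?thesis .
qed

lemma shifted_Suc:
  "shifted n (Suc k) * ((real k + 1) * (2 * real n + 7/2 + real k) * (3 * real n + 19/4 + real k))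
     = - shifted n k * ((- 2 * real n - 2 + real k) * (- 3 * real n - 13/4 + real k) * (1/2 + real k))"
  unfolding shifted_def by (rule hterm_Suc) auto

(* The recurrence coefficients q(n), p(n) of the sum, the common factor
   cert_scale(n) introduced by clearing denominators, and the polynomial part
   W(n,k) of the Zeilberger certificate G(n,k) = H(n,k) W(n,k). *)
definition cert_scale :: "real \<Rightarrow> real" where
  "cert_scale x = 6 * (2 * x + 1) * (x + 1) * (12 * x + 5) * (12 * x + 13) * (4 * x + 3)^2"

definition rec_lead :: "real \<Rightarrow> real" where
  "rec_lead x = 5 * (20 * x + 11) * (20 * x + 19) * (20 * x + 23) * (20 * x + 7)"

definition rec_tail :: "real \<Rightarrow> real" where
  "rec_tail x = 12 * (12 * x + 11) * (12 * x + 7) * (4 * x + 5)^2"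

definition certificate :: "real \<Rightarrow> real \<Rightarrow> real" where
  "certificate x y = ((-1696793175) + (-25676063430) * x^1 + (-171014345592) * x^2 + (-660708758784) * x^3 + (-1640832806400) * x^4 + (-2738651040768) * x^5 + (-3112980688896) * x^6 + (-2380883951616) * x^7 + (-1173263155200) * x^8 + (-336575987712) * x^9 + (-42707976192) * x^10) * y^1 + ((-1393251900) + (-19219525180) * x^1 + (-115932927008) * x^2 + (-401113961344) * x^3 + (-877086216704) * x^4 + (-1256976855040) * x^5 + (-1180784156672) * x^6 + (-701210591232) * x^7 + (-238914502656) * x^8 + (-35589980160) * x^9) * y^2 + ((130786528) + (1411748256) * x^1 + (6222708224) * x^2 + (14318360064) * x^3 + (17768689664) * x^4 + (9971589120) * x^5 + (-919076864) * x^6 + (-3772121088) * x^7 + (-1274019840) * x^8) * y^3 + ((444040712) + (4422497056) * x^1 + (18928345216) * x^2 + (44895789568) * x^3 + (63528687616) * x^4 + (53507416064) * x^5 + (24795774976) * x^6 + (4869980160) * x^7) * y^4 + ((16846624) + (130981632) * x^1 + (540220928) * x^2 + (1318330368) * x^3 + (1845157888) * x^4 + (1356791808) * x^5 + (406978560) * x^6) * y^5 + ((-106843520) + (-699996672) * x^1 + (-1875136512) * x^2 + (-2540158976) * x^3 + (-1731035136) * x^4 + (-472514560) * x^5) * y^6 + ((-15672832) + (-76627968) * x^1 + (-158482432) * x^2 + (-156499968) * x^3 + (-62259200) * x^4) * y^7 + ((12851200) + (47177728) * x^1 + (60850176) * x^2 + (26869760) * x^3) * y^8 + ((2646016) + (6094848)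 * x^1 + (4587520) * x^2) * y^9 + ((-557056) + (-655360) * x^1) * y^10 + ((-131072)) * y^11"

(* After dividing by H(n,k) and clearing denominators, the telescoping
   relation becomes this polynomial identity in x = n, y = k. *)
lemma certificate_identity:
  fixes x y :: real
  defines "den \<equiv> (y + 1) * (2 * x + 7/2 + y) * (3 * x + 19/4 + y)"
    and "num \<equiv> (- 2 * x - 2 + y) * (- 3 * x - 13/4 + y) * (1/2 + y)"
    and "AC \<equiv> shift_num x 0 * shift_den x 0"
  shows "(4 * y + 1) * (cert_scale x * rec_lead x * AC - cert_scale x * rec_tail x * shift_num x y * shift_den x y) * den
       = - num * AC * certificate x (y + 1) - den * AC * certificate x y"
  unfolding den_def num_def AC_def shift_num_def shift_den_def pochhammer_2 pochhammer_3
    cert_scale_def rec_lead_def rec_tail_def certificate_def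
  by algebra

(* The factor cleared in summand_via_shifted is nonzero: its first part is a
   product of five negative numbers, its second of five positive ones. *)
lemma shift_products_nonzero: "shift_num (real n) 0 * shift_den (real n) 0 \<noteq> 0"
proof -
  have "shift_num (real n) 0 < 0" unfolding shift_num_def pochhammer_2 pochhammer_3
    by (simp add: mult_pos_neg mult_neg_neg)
  moreover have "shift_den (real n) 0 > 0" unfolding shift_den_def pochhammer_2 pochhammer_3
    by (simp add: add_pos_nonneg)
  ultimately show ?thesis by simp
qed

definition telescoper :: "nat \<Rightarrow> nat \<Rightarrow> real" where
  "telescoper n k = shifted n k * certificate (real n) (real k)"

lemma creative_telescoping:
  "cert_scale (real n) * rec_lead (real n) * summand (Suc n) k - cert_scale (real n) * rec_tail (real n) * summand n k
     = telescoper n (Suc k) - telescoper n k"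
proof -
  define x y where "x = real n" and "y = real k"
  define den num AC where "den = (y + 1) * (2 * x + 7/2 + y) * (3 * x + 19/4 + y)"
    and "num = (- 2 * x - 2 + y) * (- 3 * x - 13/4 + y) * (1/2 + y)"
    and "AC = shift_num x 0 * shift_den x 0"
  define h h' where "h = shifted n k" and "h' = shifted n (Suc k)"
  have F1: "summand (Suc n) k = (4 * y + 1) * h"
    unfolding h_def y_def by (rule summand_Suc)
  have F0: "summand n k * AC = (4 * y + 1) * h * shift_num x y * shift_den x y"
    unfolding h_def x_def y_def AC_def by (rule summand_via_shifted)
  have H1: "h' * den = - h * num"
    unfolding h_def h'_def den_def num_def x_def y_def by (rule shifted_Suc)
  have nz: "AC * den \<noteq> 0"
    using shift_products_nonzero[of n] by (simp add: AC_def den_def x_def y_def add_pos_nonneg)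
  have "(cert_scale x * rec_lead x * summand (Suc n) k - cert_scale x * rec_tail x * summand n k) * (AC * den)
      = h * ((4 * y + 1) * (cert_scale x * rec_lead x * AC - cert_scale x * rec_tail x * shift_num x y * shift_den x y) * den)"
    using F1 F0 by algebra
  also have "\<dots> = h * (- num * AC * certificate x (y + 1) - den * AC * certificate x y)"
    unfolding den_def num_def AC_def by (rule arg_cong[OF certificate_identity])
  also have "\<dots> = (h' * certificate x (y + 1) - h * certificate x y) * (AC * den)"
    using H1 by algebra
  finally have eq: "cert_scale x * rec_lead x * summand (Suc n) k - cert_scale x * rec_tail x * summand n k
      = h' * certificate x (y + 1) - h * certificate x y"
    using nz by simp
  have y1: "real (Suc k) = y + 1" by (simp add: y_def)
  show ?thesis using eq unfolding telescoper_def y1 h_def h'_def x_def y_def .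
qed

(* Both series terminate because (-2n)_k vanishes for k > 2n. *)
lemma summand_vanishes: "2 * n < k \<Longrightarrow> summand n k = 0"
  using pochhammer_of_nat_eq_0_lemma[of "2 * n" k, where 'a = real] by (simp add: summand_def)

lemma shifted_vanishes: "2 * n + 2 < k \<Longrightarrow> shifted n k = 0"
proof -
  assume "2 * n + 2 < k"
  then have "pochhammer (- of_nat (2 * n + 2)) k = (0::real)"
    by (rule pochhammer_of_nat_eq_0_lemma)
  moreover have "- 2 * real n - 2 = - of_nat (2 * n + 2)" by simp
  ultimately show ?thesis unfolding shifted_def hterm_def by (simp only:)
qed

(* The sum satisfies q(n) S(n+1) = p(n) S(n): telescope over k < 2n+3,
   where G vanishes at both ends, and cancel the positive factor cert_scale. *)
lemma sum_recurrence:
  "rec_lead (real n) * suminf (summand (Suc n)) = rec_tail (real n) * suminf (summand n)"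
proof -
  have "cert_scale (real n) * rec_lead (real n) * suminf (summand (Suc n))
      = cert_scale (real n) * rec_tail (real n) * suminf (summand n)"
  proof (rule telescoping_sum_relation[where N = "2 * n + 3" and G = "telescoper n"])
    show "telescoper n 0 = 0" by (simp add: telescoper_def certificate_def)
    show "telescoper n (2 * n + 3) = 0" by (simp add: telescoper_def shifted_vanishes)
  qed (auto simp: creative_telescoping summand_vanishes)
  moreover have "cert_scale (real n) > 0" by (simp add: cert_scale_def add_pos_nonneg)
  ultimately show ?thesis by simp
qed

(* The right-hand side obeys the same recurrence, since R(n+1)/R(n) = p(n)/q(n). *)
lemma closed_form_recurrence:
  "rec_lead (real n) * closed_form (Suc n) = rec_tail (real n) * closed_form n"
proof -
  define x where "x = real n"
  define c :: real where "c = (2^2 * 3^3) / 5^5"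
  define N :: "nat \<Rightarrow> real" where "N m = pochhammer (11/12) m * pochhammer (7/12) m * (pochhammer (5/4) m)^2" for m
  define D :: "nat \<Rightarrow> real" where "D m = pochhammer (11/20) m * pochhammer (19/20) m * pochhammer (23/20) m * pochhammer (7/20) m"
    for m
  define nr where "nr = (11/12 + x) * (7/12 + x) * (5/4 + x)^2"
  define dr where "dr = (11/20 + x) * (19/20 + x) * (23/20 + x) * (7/20 + x)"
  have cf: "closed_form m = c ^ m * N m / D m" for m
    unfolding closed_form_def c_def N_def D_def ..
  have "N (Suc n) = N n * nr"
    unfolding N_def nr_def x_def pochhammer_rec' by algebra
  moreover have "D (Suc n) = D n * dr"
    unfolding D_def dr_def x_def pochhammer_rec' by algebra
  ultimately have step: "closed_form (Suc n) = closed_form n * (c * nr / dr)"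
    unfolding cf by (simp add: times_divide_times_eq ac_simps)
  have "dr \<noteq> 0" unfolding dr_def x_def by (simp add: add_pos_nonneg)
  moreover have "rec_lead x = 800000 * dr" "rec_tail x = 27648 * nr"
    unfolding rec_lead_def rec_tail_def dr_def nr_def by algebra+
  ultimately have "rec_lead x * (c * nr / dr) = rec_tail x"
    by (simp add: c_def)
  then show ?thesis unfolding step x_def by (metis mult.assoc mult.commute)
qed

(* Both sides equal 1 at n = 0, hence they agree for all n. *)
lemma summation_formula: "suminf (summand n) = closed_form n"
proof (rule first_order_recurrence_unique[where q = "\<lambda>n. rec_lead (real n)" and p = "\<lambda>n. rec_tail (real n)"])
  have "suminf (summand 0) = (\<Sum>k<1. summand 0 k)"
    by (rule suminf_finite) (auto simp: summand_vanishes)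
  then show "suminf (summand 0) = closed_form 0"
    by (simp add: summand_def closed_form_def)
next
  show "\<And>n. rec_lead (real n) \<noteq> 0" by (simp add: rec_lead_def add_pos_nonneg)
qed (rule sum_recurrence closed_form_recurrence)+

theorem theorem9:
  fixes n :: nat
  shows "(\<Sum>k. (-1::real) ^ k * (4 * real k + 1) *
            (pochhammer (- 2 * real n) k * pochhammer (- 3 * real n - 1/4) k * pochhammer (1/2) k)
          / (fact k * pochhammer (2 * real n + 3/2) k * pochhammer (3 * real n + 7/4) k))
       = ((2^2 * 3^3) / 5^5) ^ n *
         (pochhammer (11/12) n * pochhammer (7/12) n * (pochhammer (5/4) n)^2)
         / (pochhammer (11/20) n * pochhammer (19/20) n * pochhammer (23/20) n * pochhammer (7/20) n)"
  using summation_formula[of n] unfolding summand_def closed_form_def .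

end
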